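(* Assume the setting described in the context. For every $W\in\mathrm{Stab}_\pi$, the sequence $\varphi_W$ is strongly stable.
   Context: Setting: $\Omega$ is a finite set and $F$ a finite set of flaws, each a nonempty subset of $\Omega$; $F_\sigma=\{f:\sigma\in f\}$. For $\sigma\in\Omega$ and $f\in F_\sigma$ there is a probability distribution $\rho(\cdot\mid f,\sigma)$ with support $A(f,\sigma)$. A walk is $\sigma_1\xrightarrow{w_1}\sigma_2\cdots\xrightarrow{w_t}\sigma_{t+1}$ with $w_i\in F_{\sigma_i}$ and $\sigma_{i+1}\in A(w_i,\sigma_i)$, with word $w_1\ldots w_t$. $\sim$ is a symmetric relation on $F$ (loops allowed), with $\Gamma(f)=\{g:f\sim g\}$, $\Gamma^+(f)=\Gamma(f)\cup\{f\}$ and unions over sets $\Gamma(S)$, $\Gamma^+(S)$. It is assumed that $(F,\sim)$ is a potential causality graph: for every step $\sigma\xrightarrow{f}\sigma'$, $F_{\sigma'}\subseteq(F_\sigma\setminus\{f\})\cup\Gamma(f)$. $S$ is independent if $f\not\sim g$ for distinct $f,g\in S$; $\mathrm{Ind}(F)$ is the family of independent sets. A sequence $(I_1,\ldots,I_s)$, $s\ge1$, is stable if $I_r\in\mathrm{Ind}(F)$ and $I_{r+1}\subseteq\Gamma^+(I_r)$. A word $W$ is stable if $W=W_1\ldots W_s$ (a unique partition) with nonempty words $W_r$ of distinct flaws whose flaw sets $I_r$ form a stable sequence. Then $\varphi_W=(I_1,\ldots,I_s)$, and $\varphi_W=(\varnothing)$ for the empty word. $W$ is $\pi$-stable if in addition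 each $W_r$ is strictly increasing in the order induced by a permutation $\pi$ of $F$. $\mathrm{Stab}_\pi$ is the set of $\pi$-stable words $W$ such that some walk has word $W$ or the reverse of $W$. A sequence $(I_1,\ldots,I_s)$ with $s\ge1$ is strongly stable if $I_r\in\mathrm{Ind}(F)$ for all $r$, $I_{r+1}\subseteq\Gamma(I_r)$ for $r\in[s-1]$, and $I_r\ne\varnothing$ for $r\in[2,s]$. *)

theory Defs
  imports "HOL-Probability.Probability_Mass_Function"
begin

(* Flaws are subsets of the state space; states have type 'a, flaws type 'a set. *)

definition Fsig :: "'a set set \<Rightarrow> 'a \<Rightarrow> 'a set set" where
  "Fsig F \<sigma> = {f \<in> F. \<sigma> \<in> f}"

definition Gam :: "'a set set \<Rightarrow> ('a set \<Rightarrow> 'a set \<Rightarrow> bool) \<Rightarrow> 'a set \<Rightarrow> 'a set set" where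
  "Gam F sim f = {g \<in> F. sim f g}"

definition GamS :: "'a set set \<Rightarrow> ('a set \<Rightarrow> 'a set \<Rightarrow> bool) \<Rightarrow> 'a set set \<Rightarrow> 'a set set" where
  "GamS F sim S = (\<Union>f\<in>S. Gam F sim f)"

definition GamP :: "'a set set \<Rightarrow> ('a set \<Rightarrow> 'a set \<Rightarrow> bool) \<Rightarrow> 'a set set \<Rightarrow> 'a set set" where
  "GamP F sim S = GamS F sim S \<union> S"

definition indep :: "'a set set \<Rightarrow> ('a set \<Rightarrow> 'a set \<Rightarrow> bool) \<Rightarrow> 'a set set \<Rightarrow> bool" where
  "indep F sim S \<longleftrightarrow> S \<subseteq> F \<and> (\<forall>f\<in>S. \<forall>g\<in>S. f \<noteq> g \<longrightarrow> \<not> sim f g)"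

definition stable_seq :: "'a set set \<Rightarrow> ('a set \<Rightarrow> 'a set \<Rightarrow> bool) \<Rightarrow> 'a set set list \<Rightarrow> bool" where
  "stable_seq F sim Is \<longleftrightarrow> Is \<noteq> [] \<and> (\<forall>I\<in>set Is. indep F sim I) \<and>
     (\<forall>r. Suc r < length Is \<longrightarrow> Is ! Suc r \<subseteq> GamP F sim (Is ! r))"

definition strongly_stable :: "'a set set \<Rightarrow> ('a set \<Rightarrow> 'a set \<Rightarrow> bool) \<Rightarrow> 'a set set list \<Rightarrow> bool" where
  "strongly_stable F sim Is \<longleftrightarrow> Is \<noteq> [] \<and> (\<forall>I\<in>set Is. indep F sim I) \<and>
     (\<forall>r. Suc r < length Is \<longrightarrow> Is ! Suc r \<subseteq> GamS F sim (Is ! r)) \<and>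
     (\<forall>r. 0 < r \<and> r < length Is \<longrightarrow> Is ! r \<noteq> {})"

definition stable_partition :: "'a set set \<Rightarrow> ('a set \<Rightarrow> 'a set \<Rightarrow> bool) \<Rightarrow> 'a set list \<Rightarrow> 'a set list list \<Rightarrow> bool" where
  "stable_partition F sim W Ws \<longleftrightarrow> concat Ws = W \<and> (\<forall>B\<in>set Ws. B \<noteq> [] \<and> distinct B) \<and>
     stable_seq F sim (map set Ws)"

definition stable_word :: "'a set set \<Rightarrow> ('a set \<Rightarrow> 'a set \<Rightarrow> bool) \<Rightarrow> 'a set list \<Rightarrow> bool" where
  "stable_word F sim W \<longleftrightarrow> (\<exists>Ws. stable_partition F sim W Ws)"

definition phi :: "'a set set \<Rightarrow> ('a set \<Rightarrow> 'a set \<Rightarrow> bool) \<Rightarrow> 'a set list \<Rightarrow> 'a set set list" where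
  "phi F sim W = (if W = [] then [{}] else map set (THE Ws. stable_partition F sim W Ws))"

definition pi_stable :: "'a set set \<Rightarrow> ('a set \<Rightarrow> 'a set \<Rightarrow> bool) \<Rightarrow> ('a set \<Rightarrow> nat) \<Rightarrow> 'a set list \<Rightarrow> bool" where
  "pi_stable F sim \<pi> W \<longleftrightarrow> (\<exists>Ws. stable_partition F sim W Ws \<and>
     (\<forall>B\<in>set Ws. sorted_wrt (\<lambda>f g. \<pi> f < \<pi> g) B))"

(* walk sigma_1 -w_1-> sigma_2 ... -w_t-> sigma_{t+1}, with A(f,sigma) = support of rho(.|f,sigma) *)
definition is_walk :: "'a set \<Rightarrow> 'a set set \<Rightarrow> ('a set \<Rightarrow> 'a \<Rightarrow> 'a pmf) \<Rightarrow> 'a list \<Rightarrow> 'a set list \<Rightarrow> bool" where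
  "is_walk \<Omega> F \<rho> \<sigma>s ws \<longleftrightarrow> length \<sigma>s = Suc (length ws) \<and> \<sigma>s ! 0 \<in> \<Omega> \<and>
     (\<forall>i < length ws. ws ! i \<in> Fsig F (\<sigma>s ! i) \<and> \<sigma>s ! Suc i \<in> set_pmf (\<rho> (ws ! i) (\<sigma>s ! i)))"

definition Stab :: "'a set \<Rightarrow> 'a set set \<Rightarrow> ('a set \<Rightarrow> 'a \<Rightarrow> 'a pmf) \<Rightarrow> ('a set \<Rightarrow> 'a set \<Rightarrow> bool)
     \<Rightarrow> ('a set \<Rightarrow> nat) \<Rightarrow> 'a set list set" where
  "Stab \<Omega> F \<rho> sim \<pi> = {W. pi_stable F sim \<pi> W \<and>
     (\<exists>\<sigma>s. is_walk \<Omega> F \<rho> \<sigma>s W \<or> is_walk \<Omega> F \<rho> \<sigma>s (rev W))}"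

end

theory Submission
  imports Defs
begin

text \<open>
  Addressing a flaw g removes it and can only (re)introduce flaws adjacent to the flaw addressed.
  Hence, if g occurs twice in a walk, some flaw addressed from the first occurrence up to the
  second one must be adjacent to g. For consecutive blocks I, J of a stable word sharing a flaw g,
  the flaws strictly between the two occurrences of g lie in I or J; those in J are not adjacent
  to g by independence, so g is adjacent to itself or to a flaw of I, i.e. g \<in> \<Gamma>(I).
  Uniqueness of the block partition makes \<phi> well defined.
\<close>

lemma stable_seq_tl:
  assumes "stable_seq F sim (I # Is)" and "Is \<noteq> []"
  shows "stable_seq F sim Is"
  unfolding stable_seq_def
proof (intro conjI allI impI)
  fix r assume "Suc r < length Is"
  then show "Is ! Suc r \<subseteq> GamP F sim (Is ! r)"
    using assms(1) unfolding stable_seq_def by (metis Suc_less_eq length_Cons nth_Cons_Suc)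
qed (use assms in \<open>auto simp: stable_seq_def\<close>)

lemma stable_partition_tl:
  assumes "stable_partition F sim W (B # Ws)" and "Ws \<noteq> []"
  shows "stable_partition F sim (concat Ws) Ws"
  using assms stable_seq_tl[of F sim "set B" "map set Ws"] by (simp add: stable_partition_def)

lemma stable_partition_consecutive_blocks:
  assumes "stable_partition F sim W (P @ B # C # S)"
  shows "set C \<subseteq> GamP F sim (set B)" and "indep F sim (set C)" and "distinct C"
proof -
  have seq: "stable_seq F sim (map set (P @ B # C # S))"
    using assms by (simp add: stable_partition_def)
  then show "indep F sim (set C)" by (simp add: stable_seq_def)
  from seq have "map set (P @ B # C # S) ! Suc (length P)
      \<subseteq> GamP F sim (map set (P @ B # C # S) ! length P)"
    unfolding stable_seq_def by simp
  then show "set C \<subseteq> GamP F sim (set B)" by (simp add: nth_append)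
  show "distinct C" using assms by (simp add: stable_partition_def)
qed

lemma stable_partition_first_block_maximal:
  assumes P: "stable_partition F sim W (B # Ws)" and P': "stable_partition F sim W (B' # Ws')"
  shows "length B' \<le> length B"
proof (rule ccontr)
  assume "\<not> length B' \<le> length B"
  moreover have W: "W = B @ concat Ws" "W = B' @ concat Ws'"
    using P P' by (simp_all add: stable_partition_def)
  ultimately obtain x Y where B': "B' = B @ x # Y"
    by (metis append_eq_append_conv_if append_take_drop_id id_take_nth_drop le_refl
        length_append not_add_less1 not_le take_all_iff)
  then have "concat Ws = x # Y @ concat Ws'" using W by simp
  then obtain C Ws1 where Ws: "Ws = C # Ws1" and "C \<noteq> []" and "hd C = x"
    using P by (cases Ws; cases "hd Ws") (auto simp: stable_partition_def)
  then have "x \<in> GamP F sim (set B)"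
    using stable_partition_consecutive_blocks(1)[of F sim W "[]" B C Ws1] P
    by (auto dest: hd_in_set)
  moreover have "distinct B'" and ind: "indep F sim (set B')"
    using P' by (simp_all add: stable_partition_def stable_seq_def)
  ultimately obtain b where "b \<in> set B" "sim b x" "b \<noteq> x"
    using B' by (auto simp: GamP_def GamS_def Gam_def)
  then show False using ind B' by (auto simp: indep_def)
qed

lemma stable_partition_unique:
  "stable_partition F sim W Ws \<Longrightarrow> stable_partition F sim W Ws' \<Longrightarrow> Ws = Ws'"
proof (induction Ws arbitrary: W Ws')
  case Nil
  then show ?case by (simp add: stable_partition_def stable_seq_def)
next
  case (Cons B Ws)
  obtain B' Ws1 where Ws': "Ws' = B' # Ws1"
    using Cons.prems(2) by (cases Ws') (auto simp: stable_partition_def stable_seq_def)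
  have "length B = length B'"
    using stable_partition_first_block_maximal Cons.prems Ws' by (metis le_antisym)
  moreover have "B @ concat Ws = B' @ concat Ws1"
    using Cons.prems Ws' by (simp add: stable_partition_def)
  ultimately have "B = B'" and tails: "concat Ws = concat Ws1" by auto
  have "Ws = [] \<longleftrightarrow> Ws1 = []"
    using tails Cons.prems Ws' by (auto simp: stable_partition_def)
  then have "Ws = Ws1"
    using Cons.IH stable_partition_tl tails Cons.prems Ws' by metis
  then show ?case using \<open>B = B'\<close> Ws' by simp
qed

lemma phi_stable_partition:
  assumes "stable_partition F sim W Ws"
  shows "phi F sim W = map set Ws"
proof -
  have "W \<noteq> []"
    using assms by (cases Ws) (auto simp: stable_partition_def stable_seq_def)
  moreover have "(THE Ws. stable_partition F sim W Ws) = Ws"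
    using assms stable_partition_unique by blast
  ultimately show ?thesis by (simp add: phi_def)
qed

locale causality_walks =
  fixes \<Omega> :: "'a set" and F :: "'a set set" and \<rho> :: "'a set \<Rightarrow> 'a \<Rightarrow> 'a pmf"
    and sim :: "'a set \<Rightarrow> 'a set \<Rightarrow> bool"
  assumes steps_closed: "\<forall>\<sigma>\<in>\<Omega>. \<forall>f\<in>Fsig F \<sigma>. set_pmf (\<rho> f \<sigma>) \<subseteq> \<Omega>"
    and potential_causality: "\<forall>\<sigma>\<in>\<Omega>. \<forall>f\<in>Fsig F \<sigma>. \<forall>\<sigma>'\<in>set_pmf (\<rho> f \<sigma>).
           Fsig F \<sigma>' \<subseteq> (Fsig F \<sigma> - {f}) \<union> Gam F sim f"
begin

lemma walk_state_in_Omega: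
  assumes "is_walk \<Omega> F \<rho> \<sigma>s ws" and "k \<le> length ws"
  shows "\<sigma>s ! k \<in> \<Omega>"
  using assms(2)
proof (induction k)
  case 0
  then show ?case using assms(1) by (simp add: is_walk_def)
next
  case (Suc k)
  then have "\<sigma>s ! k \<in> \<Omega>" by simp
  moreover have "ws ! k \<in> Fsig F (\<sigma>s ! k)" "\<sigma>s ! Suc k \<in> set_pmf (\<rho> (ws ! k) (\<sigma>s ! k))"
    using assms(1) Suc.prems by (auto simp: is_walk_def)
  ultimately show ?case using steps_closed by blast
qed

lemma walk_step_flaws:
  assumes "is_walk \<Omega> F \<rho> \<sigma>s ws" and "k < length ws"
  shows "Fsig F (\<sigma>s ! Suc k) \<subseteq> (Fsig F (\<sigma>s ! k) - {ws ! k}) \<union> Gam F sim (ws ! k)"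
  using assms walk_state_in_Omega[OF assms(1), of k] potential_causality
  by (auto simp: is_walk_def)

lemma walk_addressed_flaw_stays_absent:
  assumes walk: "is_walk \<Omega> F \<rho> \<sigma>s ws" and "ws ! i = g"
    and "i < j" and "j \<le> length ws"
    and no_neighbour: "\<forall>k. i \<le> k \<and> k < j \<longrightarrow> \<not> sim (ws ! k) g"
  shows "g \<notin> Fsig F (\<sigma>s ! j)"
  using \<open>i < j\<close> \<open>j \<le> length ws\<close> no_neighbour
proof (induction j)
  case 0
  then show ?case by simp
next
  case (Suc k)
  have "g \<notin> Gam F sim (ws ! k)" using no_neighbour Suc.prems by (simp add: Gam_def)
  moreover have "g \<notin> Fsig F (\<sigma>s ! k) - {ws ! k}"
    using Suc \<open>ws ! i = g\<close> by (cases "i = k") auto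
  ultimately show ?case using walk_step_flaws[OF walk, of k] Suc.prems by auto
qed

lemma walk_repeated_flaw_has_neighbour:
  assumes walk: "is_walk \<Omega> F \<rho> \<sigma>s (A @ (g # M) @ (g # R))"
  shows "\<exists>x\<in>set (g # M). sim x g"
proof (rule ccontr)
  assume no_neighbour: "\<not> (\<exists>x\<in>set (g # M). sim x g)"
  let ?ws = "A @ (g # M) @ (g # R)" and ?j = "length A + length (g # M)"
  have "?ws ! k \<in> set (g # M)" if "length A \<le> k" "k < ?j" for k
    using that nth_mem[of "k - length A" "g # M"] by (simp add: nth_append del: append_Cons)
  then have "\<forall>k. length A \<le> k \<and> k < ?j \<longrightarrow> \<not> sim (?ws ! k) g"
    using no_neighbour by blast
  then have "g \<notin> Fsig F (\<sigma>s ! ?j)"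
    by (intro walk_addressed_flaw_stays_absent[OF walk, of "length A"]) simp_all
  moreover have "?ws ! ?j \<in> Fsig F (\<sigma>s ! ?j)"
    using walk by (auto simp: is_walk_def)
  ultimately show False by (simp add: nth_append)
qed

lemma walk_or_reverse_repeated_flaw_has_neighbour:
  assumes "is_walk \<Omega> F \<rho> \<sigma>s (A @ (g # M) @ (g # R))
      \<or> is_walk \<Omega> F \<rho> \<sigma>s (rev (A @ (g # M) @ (g # R)))"
  shows "\<exists>x\<in>set (g # M). sim x g"
  using assms
proof
  assume "is_walk \<Omega> F \<rho> \<sigma>s (rev (A @ (g # M) @ (g # R)))"
  then have "is_walk \<Omega> F \<rho> \<sigma>s (rev R @ (g # rev M) @ (g # rev A))" by simp
  then show ?thesis using walk_repeated_flaw_has_neighbour by fastforce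
qed (rule walk_repeated_flaw_has_neighbour)

lemma walk_stable_partition_consecutive_blocks:
  assumes part: "stable_partition F sim W (P @ B # C # S)"
    and walk: "is_walk \<Omega> F \<rho> \<sigma>s W \<or> is_walk \<Omega> F \<rho> \<sigma>s (rev W)"
  shows "set C \<subseteq> GamS F sim (set B)"
proof
  fix g assume "g \<in> set C"
  have indC: "indep F sim (set C)" and "distinct C"
    using stable_partition_consecutive_blocks[OF part] by simp_all
  then have "g \<in> F" using \<open>g \<in> set C\<close> by (auto simp: indep_def)
  have "g \<in> GamS F sim (set B) \<or> g \<in> set B"
    using stable_partition_consecutive_blocks(1)[OF part] \<open>g \<in> set C\<close> by (auto simp: GamP_def)
  moreover have "g \<in> GamS F sim (set B)" if "g \<in> set B"
  proof -
    obtain p1 s1 where B: "B = p1 @ g # s1" using \<open>g \<in> set B\<close> by (meson split_list)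
    obtain p2 s2 where C: "C = p2 @ g # s2" using \<open>g \<in> set C\<close> by (meson split_list)
    have "W = (concat P @ p1) @ (g # s1 @ p2) @ (g # s2 @ concat S)"
      using part B C by (simp add: stable_partition_def)
    then obtain x where x: "x \<in> set (g # s1 @ p2)" "sim x g"
      using walk_or_reverse_repeated_flaw_has_neighbour walk by metis
    have "x \<notin> set p2"
    proof
      assume "x \<in> set p2"
      then have "x \<noteq> g" using \<open>distinct C\<close> C by auto
      then show False using indC \<open>x \<in> set p2\<close> C x(2) by (auto simp: indep_def)
    qed
    then have "x \<in> set B" using x(1) B by auto
    then show ?thesis using x(2) \<open>g \<in> F\<close> by (auto simp: GamS_def Gam_def)
  qed
  ultimately show "g \<in> GamS F sim (set B)" by blast
qed

end

theorem proposition9: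
  fixes \<Omega> :: "'a set" and F :: "'a set set" and \<rho> :: "'a set \<Rightarrow> 'a \<Rightarrow> 'a pmf"
    and sim :: "'a set \<Rightarrow> 'a set \<Rightarrow> bool" and \<pi> :: "'a set \<Rightarrow> nat" and W :: "'a set list"
  assumes "finite \<Omega>" and "finite F"
    and "\<forall>f\<in>F. f \<noteq> {} \<and> f \<subseteq> \<Omega>"
    and "\<forall>\<sigma>\<in>\<Omega>. \<forall>f\<in>Fsig F \<sigma>. set_pmf (\<rho> f \<sigma>) \<subseteq> \<Omega>"
    and "\<forall>f g. sim f g \<longrightarrow> sim g f"
    and "\<forall>\<sigma>\<in>\<Omega>. \<forall>f\<in>Fsig F \<sigma>. \<forall>\<sigma>'\<in>set_pmf (\<rho> f \<sigma>).
           Fsig F \<sigma>' \<subseteq> (Fsig F \<sigma> - {f}) \<union> Gam F sim f"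
    and "bij_betw \<pi> F {..<card F}"
    and "W \<in> Stab \<Omega> F \<rho> sim \<pi>"
  shows "strongly_stable F sim (phi F sim W)"
proof -
  interpret causality_walks \<Omega> F \<rho> sim
    using assms(4,6) by unfold_locales
  obtain Ws \<sigma>s where part: "stable_partition F sim W Ws"
    and walk: "is_walk \<Omega> F \<rho> \<sigma>s W \<or> is_walk \<Omega> F \<rho> \<sigma>s (rev W)"
    using assms(8) by (auto simp: Stab_def pi_stable_def)
  have "set (Ws ! Suc r) \<subseteq> GamS F sim (set (Ws ! r))" if "Suc r < length Ws" for r
  proof -
    have "Ws = take r Ws @ Ws ! r # Ws ! Suc r # drop (Suc (Suc r)) Ws"
      using that by (simp add: id_take_nth_drop Cons_nth_drop_Suc)
    then show ?thesis
      using walk_stable_partition_consecutive_blocks part walk by metis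
  qed
  then show ?thesis
    using part phi_stable_partition[OF part]
    by (auto simp: strongly_stable_def stable_partition_def stable_seq_def)
qed

end
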